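(* There is an absolute constant $c>0$ such that for all integers $n\ge 2$, $1\le k<n$, $d\ge 2k$ and $t\ge1$ with $(d+1)\mid t$, every binary $t\times n$ matrix $M$ that is $d$-runlength constrained and is a (zero-error) QNAGT scheme for $k$ defectives satisfies $$t\ge c\,\frac{d\log(n/k)}{\log(d^2/k)}.$$
   Context: $\log$ denotes the base-2 logarithm. A binary $t\times n$ matrix $M$ is $d$-runlength constrained if in every column, any two $1$'s are separated by a run of at least $d$ zeros, i.e. $M_{ij}=M_{i'j}=1$ with $i<i'$ implies $i'-i\ge d+1$. A vector is $k$-sparse if its Hamming weight is at most $k$. $M$ is a zero-error QNAGT scheme for $k$ defectives if $Mx\ne Mx'$ (real matrix-vector product) for all distinct $k$-sparse $x,x'\in\{0,1\}^n$. *)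

theory Defs
  imports "HOL-Analysis.Analysis"
begin

text \<open>A binary t x n matrix is M :: nat \<Rightarrow> nat \<Rightarrow> bool, entry (i,j) for i < t, j < n
  (True = 1, False = 0). A binary vector x \<in> {0,1}^n is a function nat \<Rightarrow> bool,
  only the coordinates j < n matter.\<close>

definition runlength_constrained :: "nat \<Rightarrow> nat \<Rightarrow> nat \<Rightarrow> (nat \<Rightarrow> nat \<Rightarrow> bool) \<Rightarrow> bool" where
  "runlength_constrained t n d M \<longleftrightarrow>
     (\<forall>j<n. \<forall>i<t. \<forall>i'<t. M i j \<and> M i' j \<and> i < i' \<longrightarrow> i' - i \<ge> d + 1)"

definition hamming_weight :: "nat \<Rightarrow> (nat \<Rightarrow> bool) \<Rightarrow> nat" where
  "hamming_weight n x = card {j. j < n \<and> x j}"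

definition sparse :: "nat \<Rightarrow> nat \<Rightarrow> (nat \<Rightarrow> bool) \<Rightarrow> bool" where
  "sparse n k x \<longleftrightarrow> hamming_weight n x \<le> k"

definition mat_vec :: "nat \<Rightarrow> (nat \<Rightarrow> nat \<Rightarrow> bool) \<Rightarrow> (nat \<Rightarrow> bool) \<Rightarrow> nat \<Rightarrow> real" where
  "mat_vec n M x i = (\<Sum>j<n. (if M i j then 1 else 0) * (if x j then 1 else 0))"

definition QNAGT :: "nat \<Rightarrow> nat \<Rightarrow> nat \<Rightarrow> (nat \<Rightarrow> nat \<Rightarrow> bool) \<Rightarrow> bool" where
  "QNAGT t n k M \<longleftrightarrow>
     (\<forall>x x'. sparse n k x \<and> sparse n k x' \<and> (\<exists>j<n. x j \<noteq> x' j)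
        \<longrightarrow> (\<exists>i<t. mat_vec n M x i \<noteq> mat_vec n M x' i))"

end

theory Submission
  imports Defs "HOL-Library.FuncSet"
begin

text \<open>Cut the t = m(d+1) rows into m blocks of d+1 consecutive rows. The runlength
  constraint leaves each column at most one 1 per block, so on a block a column is described
  by one of d+2 values: the offset of its 1, or none. Hence the outcome vector of a k-set of
  columns is determined by m k such values, and since a QNAGT scheme separates all k-sets,
  (n/k)^k \<le> binomial n k \<le> (d+2)^(m k). Taking logarithms, log(n/k) \<le> m log(d+2)
  \<le> m log(d^2/k), the last step because 2k \<le> d; so the theorem holds with c = 1.\<close>

text \<open>The value d+1 encodes that column c has no 1 in block b.\<close>
definition block_offset :: "nat \<Rightarrow> (nat \<Rightarrow> nat \<Rightarrow> bool) \<Rightarrow> nat \<Rightarrow> nat \<Rightarrow> nat" where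
  "block_offset d M b c = (LEAST r. r = d + 1 \<or> M (b * (d + 1) + r) c)"

lemma block_offset_le: "block_offset d M b c \<le> d + 1"
  unfolding block_offset_def by (rule Least_le) simp

lemma runlength_constrained_same_block:
  assumes rl: "runlength_constrained t n d M" and "c < n" and "i < t" and "i' < t"
    and "i div (d + 1) = i' div (d + 1)" and "M i c" and "M i' c"
  shows "i = i'"
proof -
  have no_gap: False if "j < j'" "M j c" "M j' c" "j < t" "j' < t" "j div (d + 1) = j' div (d + 1)" for j j'
  proof -
    have "d + 1 \<le> j' - j" using rl that \<open>c < n\<close> unfolding runlength_constrained_def by blast
    then have "j + (d + 1) \<le> j'" by linarith
    then have "(j + (d + 1)) div (d + 1) \<le> j' div (d + 1)" by (rule div_le_mono)
    moreover have "(j + (d + 1)) div (d + 1) = j div (d + 1) + 1" by (rule div_add_self2) simp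
    ultimately show False using that(6) by linarith
  qed
  show ?thesis using no_gap[of i i'] no_gap[of i' i] assms by (metis linorder_neqE_nat)
qed

lemma block_offset_eq_iff:
  assumes rl: "runlength_constrained (m * (d + 1)) n d M" and "c < n" and "i < m * (d + 1)"
  shows "block_offset d M (i div (d + 1)) c = i mod (d + 1) \<longleftrightarrow> M i c"
proof -
  define b r where "b = i div (d + 1)" and "r = i mod (d + 1)"
  have i: "i = b * (d + 1) + r" unfolding b_def r_def by (metis div_mult_mod_eq)
  have "r \<le> d" unfolding r_def by (simp add: less_Suc_eq_le)
  have "b < m" using \<open>i < m * (d + 1)\<close> by (simp add: b_def less_mult_imp_div_less)
  then have "b * (d + 1) + (d + 1) \<le> m * (d + 1)"
    by (metis Suc_leI add.commute mult_Suc mult_le_mono1)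
  then have row_in_range: "b * (d + 1) + r' < m * (d + 1)" if "r' \<le> d" for r'
    using that by linarith
  have offset_unique: "r' = r" if "r' \<le> d" and "M (b * (d + 1) + r') c" and "M i c" for r'
  proof -
    have "(b * (d + 1) + r') div (d + 1) = i div (d + 1)"
      using that(1) unfolding b_def by (simp del: One_nat_def add_Suc_right)
    then have "b * (d + 1) + r' = i"
      using runlength_constrained_same_block[OF rl \<open>c < n\<close> row_in_range[OF that(1)]
          \<open>i < m * (d + 1)\<close> _ that(2,3)] by blast
    then show ?thesis using i by simp
  qed
  let ?P = "\<lambda>r'. r' = d + 1 \<or> M (b * (d + 1) + r') c"
  have least: "?P (LEAST r'. ?P r')" by (rule LeastI[of _ "d + 1"]) simp
  show ?thesis
    unfolding block_offset_def b_def[symmetric] r_def[symmetric]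
  proof
    assume "(LEAST r'. ?P r') = r"
    then show "M i c" using least i \<open>r \<le> d\<close> by simp
  next
    assume "M i c"
    then have le: "(LEAST r'. ?P r') \<le> r" using i by (intro Least_le) simp
    then have "M (b * (d + 1) + (LEAST r'. ?P r')) c" using least \<open>r \<le> d\<close> by auto
    then show "(LEAST r'. ?P r') = r" using offset_unique le \<open>r \<le> d\<close> \<open>M i c\<close> by simp
  qed
qed

lemma mat_vec_indicator:
  assumes "S \<subseteq> {..<n}"
  shows "mat_vec n M (\<lambda>j. j \<in> S) i = real (card {j \<in> S. M i j})"
proof -
  have "mat_vec n M (\<lambda>j. j \<in> S) i = (\<Sum>j<n. of_bool (j \<in> S \<and> M i j))"
    unfolding mat_vec_def by (intro sum.cong) auto
  also have "\<dots> = real (card ({..<n} \<inter> {j. j \<in> S \<and> M i j}))" by simp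
  also have "{..<n} \<inter> {j. j \<in> S \<and> M i j} = {j \<in> S. M i j}" using assms by auto
  finally show ?thesis .
qed

lemma card_filter_eq_card_filter_sorted_list_of_set:
  assumes "finite S"
  shows "card {j \<in> S. P j} = card {q. q < card S \<and> P (sorted_list_of_set S ! q)}"
proof -
  have "bij_betw ((!) (sorted_list_of_set S)) {..<card S} S"
    using assms by (intro bij_betw_nth) auto
  then have "bij_betw ((!) (sorted_list_of_set S)) {q. q < card S \<and> P (sorted_list_of_set S ! q)} {j \<in> S. P j}"
    unfolding bij_betw_def inj_on_def by auto
  then show ?thesis by (simp add: bij_betw_same_card)
qed

definition block_signature ::
    "nat \<Rightarrow> (nat \<Rightarrow> nat \<Rightarrow> bool) \<Rightarrow> nat \<Rightarrow> nat \<Rightarrow> nat set \<Rightarrow> nat \<times> nat \<Rightarrow> nat" where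
  "block_signature d M m k S =
     restrict (\<lambda>(b, q). block_offset d M b (sorted_list_of_set S ! q)) ({..<m} \<times> {..<k})"

lemma block_signature_in_PiE:
  "block_signature d M m k S \<in> ({..<m} \<times> {..<k}) \<rightarrow>\<^sub>E {..d + 1}"
  unfolding block_signature_def restrict_PiE_iff by (auto simp: block_offset_le[simplified])

lemma mat_vec_eq_card_block_signature:
  assumes rl: "runlength_constrained (m * (d + 1)) n d M"
    and S: "S \<subseteq> {..<n}" "card S = k" and i: "i < m * (d + 1)"
  shows "mat_vec n M (\<lambda>j. j \<in> S) i =
    real (card {q. q < k \<and> block_signature d M m k S (i div (d + 1), q) = i mod (d + 1)})"
proof -
  have "finite S" using S(1) finite_nat_iff_bounded by blast
  have "i div (d + 1) < m" using i by (simp add: less_mult_imp_div_less)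
  moreover have "sorted_list_of_set S ! q < n" if "q < k" for q
    using S \<open>finite S\<close> that nth_mem[of q "sorted_list_of_set S"] by auto
  ultimately have "{q. q < k \<and> M i (sorted_list_of_set S ! q)} =
      {q. q < k \<and> block_signature d M m k S (i div (d + 1), q) = i mod (d + 1)}"
    using block_offset_eq_iff[OF rl _ i] by (auto simp: block_signature_def)
  then show ?thesis
    using mat_vec_indicator[OF S(1)] card_filter_eq_card_filter_sorted_list_of_set[OF \<open>finite S\<close>] S(2)
    by simp
qed

lemma QNAGT_subset_eqI:
  assumes "QNAGT t n k M" and "S \<subseteq> {..<n}" "S' \<subseteq> {..<n}" "card S \<le> k" "card S' \<le> k"
    and "\<forall>i<t. mat_vec n M (\<lambda>j. j \<in> S) i = mat_vec n M (\<lambda>j. j \<in> S') i"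
  shows "S = S'"
proof -
  have "{j. j < n \<and> j \<in> S} = S" "{j. j < n \<and> j \<in> S'} = S'" using assms(2,3) by auto
  then have "sparse n k (\<lambda>j. j \<in> S)" "sparse n k (\<lambda>j. j \<in> S')"
    using assms(4,5) by (simp_all add: sparse_def hamming_weight_def)
  then have "\<not> (\<exists>j<n. (j \<in> S) \<noteq> (j \<in> S'))"
    using assms(1,6) unfolding QNAGT_def by blast
  then show ?thesis using assms(2,3) by blast
qed

lemma QNAGT_runlength_constrained_binomial_le:
  assumes rl: "runlength_constrained (m * (d + 1)) n d M" and "QNAGT (m * (d + 1)) n k M"
  shows "n choose k \<le> (d + 2) ^ (m * k)"
proof -
  let ?D = "{S. S \<subseteq> {..<n} \<and> card S = k}"
  have "inj_on (block_signature d M m k) ?D"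
  proof (rule inj_onI)
    fix S S' assume "S \<in> ?D" and "S' \<in> ?D"
      and same_signature: "block_signature d M m k S = block_signature d M m k S'"
    then have S: "S \<subseteq> {..<n}" "card S = k" and S': "S' \<subseteq> {..<n}" "card S' = k" by auto
    have "mat_vec n M (\<lambda>j. j \<in> S) i = mat_vec n M (\<lambda>j. j \<in> S') i" if "i < m * (d + 1)" for i
      unfolding mat_vec_eq_card_block_signature[OF rl S that] mat_vec_eq_card_block_signature[OF rl S' that]
        same_signature ..
    with S S' show "S = S'"
      by (intro QNAGT_subset_eqI[OF \<open>QNAGT _ n k M\<close>]) auto
  qed
  moreover have "block_signature d M m k ` ?D \<subseteq> ({..<m} \<times> {..<k}) \<rightarrow>\<^sub>E {..d + 1}"
    by (intro image_subsetI block_signature_in_PiE)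
  ultimately have "card ?D \<le> card (({..<m} \<times> {..<k}) \<rightarrow>\<^sub>E {..d + 1})"
    by (rule card_inj_on_le) (simp_all add: finite_PiE)
  then show ?thesis by (simp add: n_subsets card_PiE card_cartesian_product)
qed

lemma log_ratio_le_of_binomial_le:
  fixes B :: nat
  assumes "1 \<le> k" "k \<le> n" "B > 0" and "n choose k \<le> B ^ (m * k)"
  shows "log 2 (real n / real k) \<le> real m * log 2 (real B)"
proof -
  have "(real n / real k) ^ k \<le> real (n choose k)"
    using assms(2) by (rule binomial_ge_n_over_k_pow_k)
  also have "\<dots> \<le> real (B ^ (m * k))"
    using assms(4) by (simp only: of_nat_le_iff)
  also have "\<dots> = (real B ^ m) ^ k"
    by (simp add: power_mult)
  finally have "real n / real k \<le> real B ^ m"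
    using assms(1) power_mono_iff[of "real n / real k" "real B ^ m" k] by simp
  then have "log 2 (real n / real k) \<le> log 2 (real B ^ m)"
    using assms(1,2) by (intro log_mono) auto
  then show ?thesis using assms(3) by (simp add: log_nat_power)
qed

lemma add_two_le_square_div:
  assumes "1 \<le> k" and "2 * k \<le> d"
  shows "real d + 2 \<le> real d ^ 2 / real k"
proof -
  have "real k * (real d + 2) \<le> (real d / 2) * (real d + 2)"
    using assms(2) by (intro mult_right_mono) auto
  also have "\<dots> \<le> real d ^ 2" using assms by (simp add: power2_eq_square algebra_simps)
  finally show ?thesis using assms(1) by (simp add: field_simps)
qed

theorem theorem6:
  shows "\<exists>c::real. c > 0 \<and>
    (\<forall>n k d t :: nat. \<forall>M :: nat \<Rightarrow> nat \<Rightarrow> bool.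
       n \<ge> 2 \<and> 1 \<le> k \<and> k < n \<and> d \<ge> 2 * k \<and> t \<ge> 1 \<and> (d + 1) dvd t \<and>
       runlength_constrained t n d M \<and> QNAGT t n k M
       \<longrightarrow> real t \<ge> c * (real d * log 2 (real n / real k)) / log 2 (real d ^ 2 / real k))"
proof (intro exI[of _ 1] conjI allI impI)
  fix n k d t :: nat and M :: "nat \<Rightarrow> nat \<Rightarrow> bool"
  assume h: "n \<ge> 2 \<and> 1 \<le> k \<and> k < n \<and> d \<ge> 2 * k \<and> t \<ge> 1 \<and> (d + 1) dvd t \<and>
    runlength_constrained t n d M \<and> QNAGT t n k M"
  then obtain m where t: "t = m * (d + 1)" by (metis dvdE mult.commute)
  let ?L = "log 2 (real d ^ 2 / real k)"
  have dk: "real d + 2 \<le> real d ^ 2 / real k"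
    using add_two_le_square_div h by blast
  have "n choose k \<le> (d + 2) ^ (m * k)"
    using QNAGT_runlength_constrained_binomial_le h unfolding t by blast
  then have "log 2 (real n / real k) \<le> real m * log 2 (real (d + 2))"
    using h by (intro log_ratio_le_of_binomial_le) auto
  moreover have "log 2 (real (d + 2)) \<le> ?L"
    using dk by (intro log_mono) auto
  ultimately have "log 2 (real n / real k) \<le> real m * ?L"
    by (meson mult_left_mono of_nat_0_le_iff order_trans)
  then have bound: "real d * log 2 (real n / real k) \<le> real d * (real m * ?L)"
    by (rule mult_left_mono) simp
  have "1 < real d ^ 2 / real k" using dk by linarith
  then have L_pos: "?L > 0" by simp
  have "real d * real m \<le> real t" unfolding t by (simp add: algebra_simps)
  then have "real d * real m * ?L \<le> real t * ?L" using L_pos by (intro mult_right_mono) auto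
  then have "real d * (real m * ?L) \<le> real t * ?L" by (simp only: mult.assoc)
  with bound have "real d * log 2 (real n / real k) \<le> real t * ?L" by (rule order_trans)
  then show "1 * (real d * log 2 (real n / real k)) / ?L \<le> real t"
    using L_pos by (simp add: divide_le_eq)
qed simp

end
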